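(* Let $q\in\mathbb{C}^*$ with $|q|>1$, let $\rho,\rho'>0$, and let $m$ be a meromorphic function on $\mathbb{C}^*$, $m\not\equiv0$, written as $m(x)=\alpha x^{v}m_0(x)m_\infty(1/x)$ for all $x\in\mathbb{C}^*$, where $\alpha\in\mathbb{C}^*$, $v\in\mathbb{Z}$, and $m_0,m_\infty$ are meromorphic functions on $\mathbb{C}$ without pole at $0$ with $m_0(0)=m_\infty(0)=1$, such that the zeros of $m_0(x)$ (resp. $m_\infty(1/x)$) are exactly the elements of $\mathcal{Z}^*_{m,>\rho}$ (resp. $\mathcal{Z}^*_{m,\leq\rho}$) and the poles of $m_0(x)$ (resp. $m_\infty(1/x)$) are exactly the elements of $\mathcal{P}^*_{m,>\rho'}$ (resp. $\mathcal{P}^*_{m,\leq\rho'}$), all with the same multiplicities as for $m$. Then the equation $y(qx)=m(x)y(x)$ admits a meromorphic solution on $\mathbb{C}^*$ whose zeros and poles are as follows (an order $0$ meaning no zero/pole): Case $v\geq0$: - If $\alpha=1$: zeros at the elements of $q^{\mathbb{Z}}$ with order $2v$, of $aq^{\mathbb{N}^*}$ with order $\mu_{m,a}$ for every $a\in\mathcal{Z}^*_{m,>\rho}$, and of $aq^{-\mathbb{N}}$ with order $\mu_{m,a}$ for every $a\in\mathcal{P}^*_{m,\leq\rho'}$; poles at the elements of $-q^{\mathbb{Z}}$ with order $v$, of $aq^{\mathbb{N}^*}$ with order $\mu_{m,a}$ for every $a\in\mathcal{P}^*_{m,>\rho'}$, and of $aq^{-\mathbb{N}}$ with order $\mu_{m,a}$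 for every $a\in\mathcal{Z}^*_{m,\leq\rho}$. - If $\alpha\neq1$: zeros at the elements of $q^{\mathbb{Z}}$ with order $2v+1$, of $aq^{\mathbb{N}^*}$ with order $\mu_{m,a}$ for every $a\in\mathcal{Z}^*_{m,>\rho}$, and of $aq^{-\mathbb{N}}$ with order $\mu_{m,a}$ for every $a\in\mathcal{P}^*_{m,\leq\rho'}$; poles at the elements of $-q^{\mathbb{Z}}$ with order $v$, of $\alpha q^{\mathbb{Z}}$ with order $1$, of $aq^{\mathbb{N}^*}$ with order $\mu_{m,a}$ for every $a\in\mathcal{P}^*_{m,>\rho'}$, and of $aq^{-\mathbb{N}}$ with order $\mu_{m,a}$ for every $a\in\mathcal{Z}^*_{m,\leq\rho}$. Case $v<0$: - If $\alpha=1$: zeros at the elements of $-q^{\mathbb{Z}}$ with order $-v$, of $aq^{\mathbb{N}^*}$ with order $\mu_{m,a}$ for every $a\in\mathcal{Z}^*_{m,>\rho}$, and of $aq^{-\mathbb{N}}$ with order $\mu_{m,a}$ for every $a\in\mathcal{P}^*_{m,\leq\rho'}$; poles at the elements of $q^{\mathbb{Z}}$ with order $-2v$, of $aq^{\mathbb{N}^*}$ with order $\mu_{m,a}$ for every $a\in\mathcal{P}^*_{m,>\rho'}$, and of $aq^{-\mathbb{N}}$ with order $\mu_{m,a}$ for every $a\in\mathcal{Z}^*_{m,\leq\rho}$. - If $\alpha\neq1$: zeros at the elements of $-q^{\mathbb{Z}}$ with order $-v$, of $aq^{\mathbb{N}^*}$ with order $\mu_{m,a}$ for every $a\in\mathcal{Z}^*_{m,>\rho}$,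 and of $aq^{-\mathbb{N}}$ with order $\mu_{m,a}$ for every $a\in\mathcal{P}^*_{m,\leq\rho'}$; poles at the elements of $q^{\mathbb{Z}}$ with order $-2v-1$, of $\alpha q^{\mathbb{Z}}$ with order $1$, of $aq^{\mathbb{N}^*}$ with order $\mu_{m,a}$ for every $a\in\mathcal{P}^*_{m,>\rho'}$, and of $aq^{-\mathbb{N}}$ with order $\mu_{m,a}$ for every $a\in\mathcal{Z}^*_{m,\leq\rho}$.
   Context: $q^{\mathbb{Z}}=\{q^n:n\in\mathbb{Z}\}$, $-q^{\mathbb{Z}}=\{-q^n:n\in\mathbb{Z}\}$, $\alpha q^{\mathbb{Z}}=\{\alpha q^n:n\in\mathbb{Z}\}$, $aq^{\mathbb{N}^*}=\{aq^n:n\geq1\}$, $aq^{-\mathbb{N}}=\{aq^{-n}:n\geq0\}$. For $\rho>0$: $\mathcal{Z}^*_{m,\leq\rho}$ (resp. $\mathcal{Z}^*_{m,>\rho}$) is the set of zeros $a\neq0$ of $m$ with $|a|\leq\rho$ (resp. $|a|>\rho$), and $\mathcal{P}^*_{m,\leq\rho}$, $\mathcal{P}^*_{m,>\rho}$ are defined similarly for poles. $\mu_{m,a}$ is the order of multiplicity of $a$ as a zero or pole of $m$. *)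

theory Defs
  imports "HOL-Complex_Analysis.Complex_Analysis"
begin

text \<open>The orbit c q^Z = {c q^n : n in Z}; so q^Z = orbit 1 q, -q^Z = orbit (-1) q,
  alpha q^Z = orbit alpha q.\<close>
definition qorbit :: "complex \<Rightarrow> complex \<Rightarrow> complex set" where
  "qorbit c q = {c * q powi n | n. True}"

definition qorbit_pos :: "complex \<Rightarrow> complex \<Rightarrow> complex set" where
  "qorbit_pos a q = {a * q ^ n | n. n \<ge> 1}"

definition qorbit_nonpos :: "complex \<Rightarrow> complex \<Rightarrow> complex set" where
  "qorbit_nonpos a q = {a * q powi (- int n) | n. True}"

definition zeros_star :: "(complex \<Rightarrow> complex) \<Rightarrow> complex set" where
  "zeros_star m = {a. a \<noteq> 0 \<and> zorder m a > 0}"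

definition poles_star :: "(complex \<Rightarrow> complex) \<Rightarrow> complex set" where
  "poles_star m = {a. a \<noteq> 0 \<and> zorder m a < 0}"

definition mult :: "(complex \<Rightarrow> complex) \<Rightarrow> complex \<Rightarrow> int" where
  "mult m a = \<bar>zorder m a\<bar>"

definition Z_le :: "(complex \<Rightarrow> complex) \<Rightarrow> real \<Rightarrow> complex set" where
  "Z_le m \<rho> = {a \<in> zeros_star m. norm a \<le> \<rho>}"
definition Z_gt :: "(complex \<Rightarrow> complex) \<Rightarrow> real \<Rightarrow> complex set" where
  "Z_gt m \<rho> = {a \<in> zeros_star m. norm a > \<rho>}"
definition P_le :: "(complex \<Rightarrow> complex) \<Rightarrow> real \<Rightarrow> complex set" where
  "P_le m \<rho> = {a \<in> poles_star m. norm a \<le> \<rho>}"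
definition P_gt :: "(complex \<Rightarrow> complex) \<Rightarrow> real \<Rightarrow> complex set" where
  "P_gt m \<rho> = {a \<in> poles_star m. norm a > \<rho>}"

definition ind :: "complex set \<Rightarrow> complex \<Rightarrow> int" where
  "ind S x = (if x \<in> S then 1 else 0)"

text \<open>The prescribed divisor of the solution y at x (zero order counted positively,
  pole order negatively; contributions of coinciding points add up).\<close>
definition special_order :: "complex \<Rightarrow> complex \<Rightarrow> int \<Rightarrow> complex \<Rightarrow> int" where
  "special_order q \<alpha> v x =
    (if v \<ge> 0 then
       (if \<alpha> = 1 then 2 * v * ind (qorbit 1 q) x - v * ind (qorbit (-1) q) x
        else (2 * v + 1) * ind (qorbit 1 q) x - v * ind (qorbit (-1) q) x
             - ind (qorbit \<alpha> q) x)
     else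
       (if \<alpha> = 1 then (- v) * ind (qorbit (-1) q) x - (- 2 * v) * ind (qorbit 1 q) x
        else (- v) * ind (qorbit (-1) q) x - (- 2 * v - 1) * ind (qorbit 1 q) x
             - ind (qorbit \<alpha> q) x))"

definition generic_order ::
  "(complex \<Rightarrow> complex) \<Rightarrow> complex \<Rightarrow> real \<Rightarrow> real \<Rightarrow> complex \<Rightarrow> int" where
  "generic_order m q \<rho> \<rho>' x =
      (\<Sum>a\<in>{a \<in> Z_gt m \<rho>. x \<in> qorbit_pos a q}. mult m a)
    + (\<Sum>a\<in>{a \<in> P_le m \<rho>'. x \<in> qorbit_nonpos a q}. mult m a)
    - (\<Sum>a\<in>{a \<in> P_gt m \<rho>'. x \<in> qorbit_pos a q}. mult m a)
    - (\<Sum>a\<in>{a \<in> Z_le m \<rho>. x \<in> qorbit_nonpos a q}. mult m a)"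

end

theory Submission
  imports Defs
begin

(* For F meromorphic on the plane with F 0 = 1, the q-product qprod q F x = prod_{n>=1} F (x / q^n)
  converges near 0 like a geometric series and satisfies qprod q F (q * x) = F x * qprod q F x.
  This functional equation spreads meromorphy from a disc around 0 to the whole plane and shows
  that the zero order of the product at x is the sum of the zero orders of F at the x / q^n.
  Linear factors give the theta functions
  theta q c x = prod_{n>=0} (1 - x / (c q^n)) * prod_{n>=0} (1 - c / (x q^(n+1))), which have
  simple zeros exactly on c q^Z and satisfy theta q c (q * x) = - (q / c) * x * theta q c x.
  Hence theta_1^2 / (x theta_(-1)) solves y(qx) = x y(x), theta_1 / theta_alpha solves
  y(qx) = alpha y(x), qprod q m0 solves y(qx) = m0(x) y(x) and 1 / qprod q minf (q / x) solves
  y(qx) = minf(1/x) y(x). The product of these solves y(qx) = m(x) y(x), and its divisor, the sum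
  of the divisors of the factors, is the prescribed one. *)

section \<open>Zero orders of meromorphic functions\<close>

lemma analytic_at_imp_lipschitz_bound:
  fixes F :: "complex \<Rightarrow> complex"
  assumes "F analytic_on {z}"
  obtains r C where "r > 0" "C \<ge> 0" "F holomorphic_on ball z r"
    "\<And>w. w \<in> ball z r \<Longrightarrow> norm (F w - F z) \<le> C * norm (w - z)"
proof -
  obtain e where e: "e > 0" "F holomorphic_on ball z e"
    using assms analytic_on_def by auto
  define r where "r = e / 2"
  have r: "r > 0" "cball z r \<subseteq> ball z e"
    using e by (auto simp: r_def)
  have "continuous_on (cball z r) (deriv F)"
    using holomorphic_deriv[OF e(2)] r
    by (meson holomorphic_on_imp_continuous_on holomorphic_on_subset open_ball)
  then have "bounded (deriv F ` cball z r)"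
    by (intro compact_imp_bounded compact_continuous_image) auto
  then obtain B where B: "\<And>w. w \<in> cball z r \<Longrightarrow> norm (deriv F w) \<le> B"
    unfolding bounded_iff by blast
  have "B \<ge> 0"
    using B[of z] r(1) by (meson centre_in_cball less_imp_le norm_ge_zero order_trans)
  moreover have "norm (F w - F z) \<le> B * norm (w - z)" if "w \<in> cball z r" for w
  proof (rule field_differentiable_bound[OF convex_cball])
    fix u assume "u \<in> cball z r"
    with r e show "(F has_field_derivative deriv F u) (at u within cball z r)"
      by (meson DERIV_deriv_iff_field_differentiable has_field_derivative_at_within
          holomorphic_on_imp_differentiable_at open_ball subsetD)
  qed (use B r that in auto)
  moreover have "F holomorphic_on ball z r"
    using e(2) by (rule holomorphic_on_subset) (use r in auto)
  ultimately show ?thesis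
    using r(1) that by auto
qed

lemma analytic_at_nonzero_imp_ball:
  assumes "g analytic_on {z}" "g z \<noteq> 0"
  obtains e where "e > 0" "\<And>w. w \<in> ball z e \<Longrightarrow> g analytic_on {w} \<and> g w \<noteq> 0"
proof -
  obtain e1 where e1: "e1 > 0" "g holomorphic_on ball z e1"
    using assms(1) analytic_on_def by auto
  obtain e2 where e2: "e2 > 0" "\<And>w. dist z w < e2 \<Longrightarrow> g w \<noteq> 0"
    using continuous_at_avoid[OF analytic_at_imp_isCont[OF assms(1)] assms(2)] by blast
  have "g analytic_on {w} \<and> g w \<noteq> 0" if "w \<in> ball z (min e1 e2)" for w
    using that e1(2) e2(2) analytic_on_open[of "ball z e1" g]
    by (auto intro: analytic_on_subset)
  with that[of "min e1 e2"] e1 e2 show ?thesis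
    by auto
qed

lemma zorder_linear_factor: "zorder (\<lambda>u. 1 - c * u) w = (if c * w = 1 then 1 else 0)"
proof (cases "c * w = 1")
  case True
  have "zorder (\<lambda>u. 1 - c * u) w = 1"
  proof (rule zorder_eqI[where S = UNIV and g = "\<lambda>_. - c"])
    show "- c \<noteq> 0"
      using True by auto
    show "1 - c * u = - c * (u - w) powi 1" for u
      using True by (simp add: algebra_simps)
  qed auto
  with True show ?thesis
    by simp
next
  case False
  then show ?thesis
    by (auto intro!: zorder_eq_0I analytic_intros)
qed

lemma zorder_compose_divide:
  fixes f :: "complex \<Rightarrow> complex"
  assumes "c \<noteq> 0" "z \<noteq> 0" "f meromorphic_on {c / z}"
  shows "zorder (\<lambda>w. f (c / w)) z = zorder f (c / z)"
proof -
  have away: "\<forall>\<^sub>F w in at z. c / w \<noteq> c / z"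
    using eventually_neq_at_within[of z z] by eventually_elim (use assms in auto)
  have lim: "filterlim (\<lambda>w. c / w) (at (c / z)) (at z)"
    by (rule filterlim_atI[OF _ away]) (use assms in \<open>auto intro!: tendsto_intros\<close>)
  show ?thesis
  proof (cases "eventually (\<lambda>w. f w = 0) (at (c / z))")
    case True
    have "eventually (\<lambda>w. f (c / w) = 0) (at z)"
      by (rule eventually_compose_filterlim[OF True lim])
    then have "zorder (\<lambda>w. f (c / w)) z = zorder (\<lambda>_. 0) z"
      by (intro zorder_cong) auto
    also have "\<dots> = zorder (\<lambda>_. 0) (c / z)"
      by (simp add: zorder_shift')
    also have "\<dots> = zorder f (c / z)"
      by (rule zorder_cong) (use True in auto)
    finally show ?thesis .
  next
    case False
    have iso: "isolated_singularity_at f (c / z)" and ness: "not_essential f (c / z)"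
      using assms(3) by (auto simp: meromorphic_at_iff)
    have "zorder (f \<circ> (\<lambda>w. c / w)) z = zorder f (c / z) * zorder (\<lambda>w. c / w - c / z) z"
    proof (rule zorder_compose'[OF iso ness _ _ away])
      show "(\<lambda>w. c / w) analytic_on {z}"
        using assms by (auto intro!: analytic_intros)
      show "\<forall>\<^sub>F w in at (c / z). f w \<noteq> 0"
        using False by (intro non_zero_neighbour[OF iso ness]) (simp add: not_eventually)
    qed
    also have "zorder (\<lambda>w. c / w - c / z) z = 1"
    proof (rule zorder_eqI[where S = "- {0}" and g = "\<lambda>w. - c / (w * z)"])
      show "c / w - c / z = - c / (w * z) * (w - z) powi 1" if "w \<in> - {0}" for w
        using that assms by (auto simp: field_simps)
    qed (use assms in \<open>auto intro!: holomorphic_intros\<close>)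
    finally show ?thesis
      by (simp add: o_def)
  qed
qed

definition nonzero_meromorphic_on :: "(complex \<Rightarrow> complex) \<Rightarrow> complex set \<Rightarrow> bool" where
  "nonzero_meromorphic_on f A \<longleftrightarrow> f meromorphic_on A \<and> (\<forall>\<^sub>\<approx>x\<in>A. f x \<noteq> 0)"

lemma nonzero_meromorphic_onI:
  assumes "f meromorphic_on A" "open A" "connected A" "z \<in> A" "f analytic_on {z}" "f z \<noteq> 0"
  shows "nonzero_meromorphic_on f A"
proof -
  have "\<not> (\<forall>\<^sub>\<approx>w\<in>A. f w = 0)"
  proof
    assume "\<forall>\<^sub>\<approx>w\<in>A. f w = 0"
    then have "eventually (\<lambda>w. f w = 0) (at z)"
      using eventually_cosparse_imp_eventually_at[OF _ assms(4)] by blast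
    with analytic_at_neq_imp_eventually_neq[OF assms(5,6)] have "eventually (\<lambda>_. False) (at z)"
      by eventually_elim auto
    then show False
      by simp
  qed
  then show ?thesis
    using meromorphic_imp_constant_or_avoid[OF assms(1-3), of 0] assms(1)
    by (auto simp: nonzero_meromorphic_on_def)
qed

lemma nonzero_meromorphic_on_not_eventually_zero:
  assumes "nonzero_meromorphic_on f A" "A \<noteq> {}"
  shows "\<not> (\<forall>\<^sub>\<approx>x\<in>A. f x = 0)"
proof
  assume "\<forall>\<^sub>\<approx>x\<in>A. f x = 0"
  with assms(1) have "\<forall>\<^sub>\<approx>x\<in>A. False"
    unfolding nonzero_meromorphic_on_def by (auto elim: eventually_elim2)
  with assms(2) show False
    by (simp add: eventually_False)
qed

lemma nonzero_meromorphic_on_subset: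
  "nonzero_meromorphic_on f B \<Longrightarrow> A \<subseteq> B \<Longrightarrow> nonzero_meromorphic_on f A"
  unfolding nonzero_meromorphic_on_def eventually_cosparse
  by (auto intro: meromorphic_on_subset sparse_in_subset)

lemma nonzero_meromorphic_on_ident: "nonzero_meromorphic_on (\<lambda>x. x) A"
  unfolding nonzero_meromorphic_on_def
  using eventually_not_in_cosparse[of "{0}" A] by (auto intro: meromorphic_on_id)

lemma nonzero_meromorphic_on_mult:
  "nonzero_meromorphic_on f A \<Longrightarrow> nonzero_meromorphic_on g A \<Longrightarrow>
    nonzero_meromorphic_on (\<lambda>x. f x * g x) A"
  unfolding nonzero_meromorphic_on_def
  by (auto intro: meromorphic_on_mult elim: eventually_elim2)

lemma nonzero_meromorphic_on_divide:
  "nonzero_meromorphic_on f A \<Longrightarrow> nonzero_meromorphic_on g A \<Longrightarrow>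
    nonzero_meromorphic_on (\<lambda>x. f x / g x) A"
  unfolding nonzero_meromorphic_on_def
  by (auto intro: meromorphic_on_divide elim: eventually_elim2)

lemma nonzero_meromorphic_on_power:
  assumes "nonzero_meromorphic_on f A"
  shows "nonzero_meromorphic_on (\<lambda>x. f x ^ n) A"
proof -
  from assms have "\<forall>\<^sub>\<approx>x\<in>A. f x \<noteq> 0"
    unfolding nonzero_meromorphic_on_def by blast
  then have "\<forall>\<^sub>\<approx>x\<in>A. f x ^ n \<noteq> 0"
    by eventually_elim simp
  with assms show ?thesis
    unfolding nonzero_meromorphic_on_def using meromorphic_on_power by blast
qed

lemma nonzero_meromorphic_on_power_int:
  assumes "nonzero_meromorphic_on f A"
  shows "nonzero_meromorphic_on (\<lambda>x. f x powi n) A"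
proof -
  from assms have "\<forall>\<^sub>\<approx>x\<in>A. f x \<noteq> 0"
    unfolding nonzero_meromorphic_on_def by blast
  then have "\<forall>\<^sub>\<approx>x\<in>A. f x powi n \<noteq> 0"
    by eventually_elim simp
  with assms show ?thesis
    unfolding nonzero_meromorphic_on_def using meromorphic_on_powi by blast
qed

lemma nonzero_meromorphic_on_compose_scale:
  assumes "g meromorphic_on UNIV" "g analytic_on {0}" "g 0 \<noteq> 0"
  shows "nonzero_meromorphic_on (\<lambda>z. g (c * z)) UNIV"
proof (rule nonzero_meromorphic_onI[where z = 0])
  show "(\<lambda>z. g (c * z)) meromorphic_on UNIV"
    by (rule meromorphic_on_compose[OF assms(1)]) (auto intro!: analytic_intros)
  show "(\<lambda>z. g (c * z)) analytic_on {0}"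
    using analytic_on_compose[of "\<lambda>z. c * z" "{0}" g] assms(2)
    by (auto simp: o_def intro!: analytic_intros)
qed (use assms(3) in auto)

lemma nonzero_meromorphic_on_compose_divide:
  assumes "g meromorphic_on UNIV" "g analytic_on {0}" "g 0 \<noteq> 0" "c \<noteq> 0"
  shows "nonzero_meromorphic_on (\<lambda>z. g (c / z)) (- {0})"
proof -
  obtain e where e: "e > 0" "\<And>w. w \<in> ball 0 e \<Longrightarrow> g analytic_on {w} \<and> g w \<noteq> 0"
    using analytic_at_nonzero_imp_ball[OF assms(2,3)] by blast
  define z0 where "z0 = complex_of_real (2 * norm c / e)"
  have z0: "z0 \<noteq> 0" "c / z0 \<in> ball 0 e"
    using e(1) assms(4) by (auto simp: z0_def norm_divide norm_mult field_simps)
  show ?thesis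
  proof (rule nonzero_meromorphic_onI[where z = z0])
    show "(\<lambda>z. g (c / z)) meromorphic_on - {0}"
      by (rule meromorphic_on_compose[OF assms(1)]) (auto intro!: analytic_intros)
    show "connected (- {0 :: complex})"
      by (simp add: connected_punctured_universe)
    have "(\<lambda>z. c / z) analytic_on {z0}"
      using z0(1) by (intro analytic_intros) auto
    then show "(\<lambda>z. g (c / z)) analytic_on {z0}"
      using analytic_on_compose[of "\<lambda>z. c / z" "{z0}" g] e(2)[OF z0(2)] by (simp add: o_def)
  qed (use z0 e in auto)
qed

lemma nonzero_meromorphic_on_at:
  assumes "nonzero_meromorphic_on f A" "z \<in> A"
  shows "f meromorphic_on {z}" "frequently (\<lambda>w. f w \<noteq> 0) (at z)"
proof -
  show "f meromorphic_on {z}"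
    using assms meromorphic_on_subset unfolding nonzero_meromorphic_on_def by blast
  have "eventually (\<lambda>w. f w \<noteq> 0) (at z)"
    using assms eventually_cosparse_imp_eventually_at unfolding nonzero_meromorphic_on_def by blast
  then show "frequently (\<lambda>w. f w \<noteq> 0) (at z)"
    by (simp add: eventually_frequently)
qed

lemma zorder_nonzero_meromorphic_mult:
  "nonzero_meromorphic_on f A \<Longrightarrow> nonzero_meromorphic_on g A \<Longrightarrow> z \<in> A \<Longrightarrow>
    zorder (\<lambda>x. f x * g x) z = zorder f z + zorder g z"
  by (intro zorder_mult nonzero_meromorphic_on_at)

lemma zorder_nonzero_meromorphic_divide:
  "nonzero_meromorphic_on f A \<Longrightarrow> nonzero_meromorphic_on g A \<Longrightarrow> z \<in> A \<Longrightarrow>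
    zorder (\<lambda>x. f x / g x) z = zorder f z - zorder g z"
  by (intro zorder_divide nonzero_meromorphic_on_at)

lemma zorder_nonzero_meromorphic_power:
  "nonzero_meromorphic_on f A \<Longrightarrow> z \<in> A \<Longrightarrow> zorder (\<lambda>x. f x ^ n) z = int n * zorder f z"
  by (intro zorder_power nonzero_meromorphic_on_at)

lemma zorder_nonzero_meromorphic_power_int:
  "nonzero_meromorphic_on f A \<Longrightarrow> z \<in> A \<Longrightarrow> zorder (\<lambda>x. f x powi n) z = n * zorder f z"
  by (intro zorder_power_int nonzero_meromorphic_on_at)

section \<open>Convergent q-products\<close>

definition qprod :: "complex \<Rightarrow> (complex \<Rightarrow> complex) \<Rightarrow> complex \<Rightarrow> complex" where
  "qprod q F z = (\<Prod>n. F (z / q ^ Suc n))"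

locale qprod_factor =
  fixes q :: complex and F :: "complex \<Rightarrow> complex"
  assumes norm_q: "norm q > 1"
    and meromorphic: "F meromorphic_on UNIV"
    and analytic_0: "F analytic_on {0}"
    and value_0: "F 0 = 1"
begin

lemma q_nonzero: "q \<noteq> 0"
  using norm_q by auto

lemma norm_divide_qpower: "norm (z / q ^ n) = norm z * (1 / norm q) ^ n"
  by (simp add: norm_divide norm_power power_one_over)

lemma divide_qpower_in_ball:
  assumes "z \<in> ball 0 r"
  shows "z / q ^ n \<in> ball 0 r"
proof -
  have "norm (z / q ^ n) \<le> norm z"
    using norm_q by (simp add: norm_divide norm_power divide_le_eq one_le_power mult_le_cancel_left1)
  with assms show ?thesis
    by simp
qed

lemma eventually_norm_divide_qpower_less:
  "r > 0 \<Longrightarrow> eventually (\<lambda>n. norm (z / q ^ n) < r) sequentially"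
  using order_tendstoD(2)[OF LIMSEQ_divide_realpow_zero[OF norm_q, of "norm z"]]
  by (simp add: norm_divide norm_power)

lemma factor_near_0:
  obtains r C where "r > 0" "C \<ge> 0" "F holomorphic_on ball 0 r"
    "\<And>w. w \<in> ball 0 r \<Longrightarrow> norm (F w - 1) \<le> C * norm w"
    "\<And>w. w \<in> ball 0 r \<Longrightarrow> F w \<noteq> 0"
proof -
  obtain r C where r: "r > 0" "C \<ge> 0" "F holomorphic_on ball 0 r"
    and lip: "\<And>w. w \<in> ball 0 r \<Longrightarrow> norm (F w - 1) \<le> C * norm w"
    using analytic_at_imp_lipschitz_bound[OF analytic_0] value_0 by (metis diff_zero)
  define r' where "r' = min r (1 / (C + 1))"
  have "F w \<noteq> 0" if "w \<in> ball 0 r'" for w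
  proof -
    have "norm w * (C + 1) < 1"
      using that r(2) by (simp add: r'_def field_simps)
    then have "norm w + C * norm w < 1"
      by (simp add: algebra_simps)
    then have "C * norm w < 1"
      using norm_ge_zero[of w] by linarith
    with lip[of w] that show ?thesis
      by (auto simp: r'_def)
  qed
  moreover have "F holomorphic_on ball 0 r'"
    using r(3) by (rule holomorphic_on_subset) (simp add: r'_def subset_ball)
  ultimately show ?thesis
    using that[of r' C] r lip by (simp add: r'_def)
qed

lemma abs_convergent_prod_factors: "abs_convergent_prod (\<lambda>n. F (z / q ^ Suc n))"
proof -
  obtain r C where r: "r > 0" "C \<ge> 0"
    and lip: "\<And>w. w \<in> ball 0 r \<Longrightarrow> norm (F w - 1) \<le> C * norm w"
    using factor_near_0 by metis
  have "eventually (\<lambda>n. norm (z / q ^ Suc n) < r) sequentially"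
    using eventually_sequentially_Suc[of "\<lambda>n. norm (z / q ^ n) < r", THEN iffD2]
      eventually_norm_divide_qpower_less[OF r(1)] by blast
  then have "eventually (\<lambda>n. norm (norm (F (z / q ^ Suc n) - 1))
      \<le> C * norm z * (1 / norm q) ^ Suc n) sequentially"
  proof eventually_elim
    case (elim n)
    then have "norm (F (z / q ^ Suc n) - 1) \<le> C * norm (z / q ^ Suc n)"
      using lip by simp
    then show ?case
      by (simp only: norm_divide_qpower norm_of_real mult.assoc abs_norm_cancel real_norm_def)
  qed
  moreover have "summable (\<lambda>n. C * norm z * (1 / norm q) ^ Suc n)"
    using norm_q by (intro summable_mult summable_geometric) (auto simp: divide_less_eq_1)
  ultimately show ?thesis
    unfolding abs_convergent_prod_conv_summable by (rule summable_comparison_test_ev)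
qed

lemma convergent_prod_factors: "convergent_prod (\<lambda>n. F (z / q ^ Suc n))"
  by (rule abs_convergent_prod_imp_convergent_prod[OF abs_convergent_prod_factors])

lemma qprod_split: "qprod q F z = (\<Prod>k<N. F (z / q ^ Suc k)) * qprod q F (z / q ^ N)"
proof -
  have "(\<lambda>n. F (z / q ^ Suc n)) has_prod
          ((\<Prod>k<N. F (z / q ^ Suc k)) * (\<Prod>k. F (z / q ^ Suc (k + N))))"
    by (rule has_prod_ignore_initial_segment'[OF convergent_prod_factors])
  moreover have "(\<lambda>k. F (z / q ^ Suc (k + N))) = (\<lambda>k. F (z / q ^ N / q ^ Suc k))"
    by (simp add: power_add ac_simps)
  ultimately show ?thesis
    unfolding qprod_def using convergent_prod_factors convergent_prod_has_prod has_prod_unique2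
    by metis
qed

lemma qprod_functional_eq: "qprod q F (q * z) = F z * qprod q F z"
  using qprod_split[of "q * z" 1] q_nonzero by simp

lemma qprod_recursion: "qprod q F z = F (z / q) * qprod q F (z / q)"
  using qprod_functional_eq[of "z / q"] q_nonzero by simp

lemma qprod_reflected_recursion: "qprod q F (q / x) = F (1 / x) * qprod q F (q / (q * x))"
  using qprod_functional_eq[of "1 / x"] q_nonzero by simp

lemma qprod_0 [simp]: "qprod q F 0 = 1"
  by (simp add: qprod_def value_0)

lemma factor_holomorphic_on_ball:
  assumes "F holomorphic_on ball 0 r"
  shows "(\<lambda>z. F (z / q ^ n)) holomorphic_on ball 0 r"
proof -
  have "(F \<circ> (\<lambda>z. z / q ^ n)) holomorphic_on ball 0 r"
    by (rule holomorphic_on_compose_gen[OF _ assms image_subsetI[OF divide_qpower_in_ball]])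
       (use q_nonzero in \<open>auto intro!: holomorphic_intros\<close>)
  then show ?thesis
    by (simp add: o_def)
qed

lemma uniform_limit_qprod:
  assumes holo: "F holomorphic_on ball 0 r" and "C \<ge> 0"
    and bound: "\<And>w. w \<in> ball 0 r \<Longrightarrow> norm (F w - 1) \<le> C * norm w"
    and nonzero: "\<And>w. w \<in> ball 0 r \<Longrightarrow> F w \<noteq> 0"
    and K: "compact K" "K \<subseteq> ball 0 r"
  shows "uniform_limit K (\<lambda>k z. \<Prod>n<k. F (z / q ^ Suc n)) (qprod q F) sequentially"
proof -
  define P where "P = (\<lambda>k z. \<Prod>n<k. F (z / q ^ Suc n))"
  have "uniformly_convergent_on K (\<lambda>N z. \<Sum>n<N. norm (F (z / q ^ Suc n) - 1))"
  proof (rule Weierstrass_m_test')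
    show "norm (norm (F (z / q ^ Suc n) - 1)) \<le> C * r * (1 / norm q) ^ Suc n"
      if "z \<in> K" for n z
    proof -
      have "norm (F (z / q ^ Suc n) - 1) \<le> C * norm (z / q ^ Suc n)"
        using bound divide_qpower_in_ball K(2) that by blast
      also have "\<dots> \<le> C * (r * (1 / norm q) ^ Suc n)"
        using K(2) that \<open>C \<ge> 0\<close> unfolding norm_divide_qpower
        by (intro mult_left_mono mult_right_mono) auto
      finally show ?thesis
        by (simp add: mult.assoc)
    qed
    show "summable (\<lambda>n. C * r * (1 / norm q) ^ Suc n)"
      using norm_q by (intro summable_mult summable_geometric) (auto simp: divide_less_eq_1)
  qed
  moreover have "continuous_on K (\<lambda>z. F (z / q ^ Suc n))" for n
    using factor_holomorphic_on_ball[OF holo, of "Suc n"] K(2)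
    by (meson holomorphic_on_imp_continuous_on holomorphic_on_subset)
  ultimately have "uniformly_convergent_on K P"
    unfolding P_def using K(1) by (intro uniformly_convergent_on_prod')
  then have "uniform_limit K P (\<lambda>z. lim (\<lambda>k. P k z)) sequentially"
    by (simp add: uniformly_convergent_uniform_limit_iff)
  moreover have "lim (\<lambda>k. P k z) = qprod q F z" if "z \<in> K" for z
  proof -
    have "F (z / q ^ Suc n) \<noteq> 0" for n
      by (intro nonzero divide_qpower_in_ball subsetD[OF K(2) that])
    then show ?thesis
      unfolding P_def qprod_def by (rule prodinf_eq_lim'[OF convergent_prod_factors, symmetric])
  qed
  ultimately show ?thesis
    using uniform_limit_cong'[of K P P "\<lambda>z. lim (\<lambda>k. P k z)" "qprod q F"] by (simp add: P_def)
qed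

lemma qprod_holomorphic_on_ball:
  assumes holo: "F holomorphic_on ball 0 r" and "C \<ge> 0"
    and bound: "\<And>w. w \<in> ball 0 r \<Longrightarrow> norm (F w - 1) \<le> C * norm w"
    and nonzero: "\<And>w. w \<in> ball 0 r \<Longrightarrow> F w \<noteq> 0"
  shows "qprod q F holomorphic_on ball 0 r"
proof (rule holomorphic_uniform_sequence[where f = "\<lambda>k z. \<Prod>n<k. F (z / q ^ Suc n)", OF open_ball])
  show "(\<lambda>z. \<Prod>n<k. F (z / q ^ Suc n)) holomorphic_on ball 0 r" for k
    by (intro holomorphic_on_prod factor_holomorphic_on_ball[OF holo])
  fix x :: complex assume "x \<in> ball 0 r"
  then obtain d where d: "d > 0" "cball x d \<subseteq> ball 0 r"
    using open_contains_cball[of "ball 0 r"] by (meson open_ball)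
  then show "\<exists>d>0. cball x d \<subseteq> ball 0 r \<and>
      uniform_limit (cball x d) (\<lambda>k z. \<Prod>n<k. F (z / q ^ Suc n)) (qprod q F) sequentially"
    by (intro exI[of _ d] conjI uniform_limit_qprod[OF assms] compact_cball)
qed

lemma qprod_near_0:
  obtains r where "r > 0" "F holomorphic_on ball 0 r" "\<And>w. w \<in> ball 0 r \<Longrightarrow> F w \<noteq> 0"
    "qprod q F holomorphic_on ball 0 r" "\<And>z. z \<in> ball 0 r \<Longrightarrow> qprod q F z \<noteq> 0"
proof -
  obtain r C where r: "r > 0" "C \<ge> 0" "F holomorphic_on ball 0 r"
    "\<And>w. w \<in> ball 0 r \<Longrightarrow> norm (F w - 1) \<le> C * norm w"
    and nonzero: "\<And>w. w \<in> ball 0 r \<Longrightarrow> F w \<noteq> 0"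
    using factor_near_0 by metis
  have "qprod q F z \<noteq> 0" if "z \<in> ball 0 r" for z
    unfolding qprod_def
    by (intro prodinf_nonzero convergent_prod_factors nonzero divide_qpower_in_ball that)
  with that r nonzero qprod_holomorphic_on_ball[OF r(3,2,4) nonzero] show ?thesis
    by blast
qed

lemma qprod_analytic_0: "qprod q F analytic_on {0}"
proof -
  obtain r where "r > 0" "qprod q F holomorphic_on ball 0 r"
    using qprod_near_0 by metis
  then show ?thesis
    using analytic_at by fastforce
qed

lemma qprod_meromorphic_on_ball:
  assumes "qprod q F holomorphic_on ball 0 r"
  shows "qprod q F meromorphic_on ball 0 (r * norm q ^ N)"
proof (induction N)
  case 0
  then show ?case
    using assms by (simp add: analytic_on_imp_meromorphic_on analytic_on_open)
next
  case (Suc N)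
  have "(\<lambda>z. F (z / q) * qprod q F (z / q)) meromorphic_on ball 0 (r * norm q ^ Suc N)"
  proof (intro meromorphic_on_mult)
    show "(\<lambda>z. F (z / q)) meromorphic_on ball 0 (r * norm q ^ Suc N)"
      by (rule meromorphic_on_compose[OF meromorphic]) (auto intro!: analytic_intros)
    show "(\<lambda>z. qprod q F (z / q)) meromorphic_on ball 0 (r * norm q ^ Suc N)"
      by (rule meromorphic_on_compose[OF Suc.IH])
         (use q_nonzero in \<open>auto intro!: analytic_intros simp: norm_divide field_simps\<close>)
  qed
  then show ?case
    by (simp add: qprod_recursion[symmetric])
qed

lemma qprod_meromorphic: "qprod q F meromorphic_on UNIV"
proof (rule meromorphic_on_meromorphic_at[THEN iffD2], rule ballI)
  fix x :: complex
  obtain r where r: "r > 0" "qprod q F holomorphic_on ball 0 r"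
    using qprod_near_0 by metis
  obtain N where "norm x / r < norm q ^ N"
    using real_arch_pow[OF norm_q] by blast
  then have "x \<in> ball 0 (r * norm q ^ N)"
    using r(1) by (simp add: field_simps)
  then show "qprod q F meromorphic_on {x}"
    using qprod_meromorphic_on_ball[OF r(2), of N] meromorphic_on_subset by blast
qed

lemma nonzero_meromorphic_on_qprod: "nonzero_meromorphic_on (qprod q F) UNIV"
  using nonzero_meromorphic_on_compose_scale[OF qprod_meromorphic qprod_analytic_0, of 1] by simp

lemma nonzero_meromorphic_on_qprod_reflected:
  "nonzero_meromorphic_on (\<lambda>x. qprod q F (q / x)) (- {0})"
  using nonzero_meromorphic_on_compose_divide[OF qprod_meromorphic qprod_analytic_0] q_nonzero
  by simp

lemma zorder_qprod_step: "zorder (qprod q F) x = zorder F (x / q) + zorder (qprod q F) (x / q)"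
proof -
  have "qprod q F = (\<lambda>z. F (inverse q * z) * qprod q F (inverse q * z))"
    by (rule ext, subst qprod_recursion) (simp add: divide_inverse_commute)
  then have "zorder (qprod q F) x = zorder (\<lambda>z. F (inverse q * z) * qprod q F (inverse q * z)) x"
    by (rule arg_cong[where f = "\<lambda>f. zorder f x"])
  also have "\<dots> = zorder (\<lambda>z. F (inverse q * z)) x + zorder (\<lambda>z. qprod q F (inverse q * z)) x"
    using zorder_nonzero_meromorphic_mult[of _ UNIV, OF
        nonzero_meromorphic_on_compose_scale[OF meromorphic analytic_0]
        nonzero_meromorphic_on_compose_scale[OF qprod_meromorphic qprod_analytic_0]]
    by (simp add: value_0)
  also have "\<dots> = zorder F (x / q) + zorder (qprod q F) (x / q)"
    using meromorphic qprod_meromorphic q_nonzero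
    by (simp add: zorder_scale meromorphic_on_subset divide_inverse_commute)
  finally show ?thesis .
qed

lemma zorder_qprod_eq_sum:
  "zorder (qprod q F) x = (\<Sum>k<N. zorder F (x / q ^ Suc k)) + zorder (qprod q F) (x / q ^ N)"
proof (induction N)
  case (Suc N)
  then show ?case
    using zorder_qprod_step[of "x / q ^ N"] by (simp add: field_simps)
qed simp

lemma eventually_zorder_eq_0:
  "eventually (\<lambda>n. zorder F (x / q ^ n) = 0 \<and> zorder (qprod q F) (x / q ^ n) = 0) sequentially"
proof -
  obtain r where r: "r > 0" "F holomorphic_on ball 0 r" "\<And>w. w \<in> ball 0 r \<Longrightarrow> F w \<noteq> 0"
    "qprod q F holomorphic_on ball 0 r" "\<And>z. z \<in> ball 0 r \<Longrightarrow> qprod q F z \<noteq> 0"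
    using qprod_near_0 by metis
  show ?thesis
    using eventually_norm_divide_qpower_less[OF r(1), of x]
  proof eventually_elim
    case (elim n)
    then have "x / q ^ n \<in> ball 0 r"
      by simp
    then show ?case
      using r(2-5) analytic_at open_ball zorder_eq_0I by metis
  qed
qed

lemma
  shows finite_zorder_factors: "finite {n. zorder F (x / q ^ Suc n) \<noteq> 0}"
    and zorder_qprod:
      "zorder (qprod q F) x = (\<Sum>n | zorder F (x / q ^ Suc n) \<noteq> 0. zorder F (x / q ^ Suc n))"
proof -
  obtain N where N: "\<And>n. n \<ge> N \<Longrightarrow> zorder F (x / q ^ n) = 0 \<and> zorder (qprod q F) (x / q ^ n) = 0"
    using eventually_zorder_eq_0[of x] unfolding eventually_sequentially by blast
  have subset: "{n. zorder F (x / q ^ Suc n) \<noteq> 0} \<subseteq> {..<N}"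
  proof
    fix n assume n: "n \<in> {n. zorder F (x / q ^ Suc n) \<noteq> 0}"
    show "n \<in> {..<N}"
    proof (rule ccontr)
      assume "n \<notin> {..<N}"
      then have "Suc n \<ge> N"
        by simp
      with N n show False
        by blast
    qed
  qed
  then show "finite {n. zorder F (x / q ^ Suc n) \<noteq> 0}"
    by (rule finite_subset) simp
  have "zorder (qprod q F) x = (\<Sum>k<N. zorder F (x / q ^ Suc k))"
    using zorder_qprod_eq_sum[of x N] N[of N] by simp
  also have "\<dots> = (\<Sum>n | zorder F (x / q ^ Suc n) \<noteq> 0. zorder F (x / q ^ Suc n))"
    by (rule sum.mono_neutral_right) (use subset in auto)
  finally show "zorder (qprod q F) x =
      (\<Sum>n | zorder F (x / q ^ Suc n) \<noteq> 0. zorder F (x / q ^ Suc n))" .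
qed

lemma
  assumes "x \<noteq> 0"
  shows finite_zorder_reflected_factors: "finite {n. zorder (\<lambda>w. F (1 / w)) (x * q ^ n) \<noteq> 0}"
    and zorder_qprod_reflected: "zorder (\<lambda>x. qprod q F (q / x)) x =
      (\<Sum>n | zorder (\<lambda>w. F (1 / w)) (x * q ^ n) \<noteq> 0. zorder (\<lambda>w. F (1 / w)) (x * q ^ n))"
proof -
  have reflect: "zorder F (q / x / q ^ Suc n) = zorder (\<lambda>w. F (1 / w)) (x * q ^ n)" for n
  proof -
    have "q / x / q ^ Suc n = 1 / (x * q ^ n)"
      using q_nonzero assms by (simp add: field_simps)
    then show ?thesis
      using zorder_compose_divide[of 1 "x * q ^ n" F] meromorphic q_nonzero assms
      by (simp add: meromorphic_on_subset)
  qed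
  show "finite {n. zorder (\<lambda>w. F (1 / w)) (x * q ^ n) \<noteq> 0}"
    using finite_zorder_factors[of "q / x"] by (simp only: reflect)
  have "zorder (\<lambda>x. qprod q F (q / x)) x = zorder (qprod q F) (q / x)"
    using zorder_compose_divide[of q x "qprod q F"] qprod_meromorphic q_nonzero assms
    by (simp add: meromorphic_on_subset)
  then show "zorder (\<lambda>x. qprod q F (q / x)) x =
      (\<Sum>n | zorder (\<lambda>w. F (1 / w)) (x * q ^ n) \<noteq> 0. zorder (\<lambda>w. F (1 / w)) (x * q ^ n))"
    by (simp only: zorder_qprod reflect)
qed

end

section \<open>Orbits of multiplication by q\<close>

lemma inj_power:
  fixes q :: complex
  assumes "norm q > 1"
  shows "inj (\<lambda>n. q ^ n)"
proof (rule injI)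
  fix m n assume "q ^ m = q ^ n"
  then have "norm q ^ m = norm q ^ n"
    by (metis norm_power)
  with assms show "m = n"
    by (simp add: power_inject_exp)
qed

lemma card_preimage_inj:
  assumes "inj h"
  shows "card {n. h n = a} = (if a \<in> range h then 1 else 0)"
proof (cases "a \<in> range h")
  case True
  then obtain m where "a = h m"
    by blast
  with assms have "{n. h n = a} = {m}"
    by (auto simp: inj_eq)
  with True show ?thesis
    by simp
next
  case False
  then have "{n. h n = a} = {}"
    by auto
  with False show ?thesis
    by simp
qed

lemma qorbit_eq_Un:
  assumes "q \<noteq> 0"
  shows "qorbit c q = range (\<lambda>n. c * q ^ n) \<union> range (\<lambda>n. c / q ^ Suc n)"
proof -
  have negative_power: "c * q powi (- int (Suc n)) = c / q ^ Suc n" for n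
    by (simp only: power_int_minus power_int_of_nat divide_inverse)
  have "c * q powi k \<in> range (\<lambda>n. c * q ^ n) \<union> range (\<lambda>n. c / q ^ Suc n)" for k
  proof (cases k rule: int_cases)
    case (nonneg n)
    then show ?thesis
      using rangeI[of "\<lambda>n. c * q ^ n" n] by simp
  next
    case (neg n)
    then show ?thesis
      using negative_power[of n] by blast
  qed
  moreover have "c * q ^ n \<in> qorbit c q" for n
    unfolding qorbit_def by (auto intro!: exI[of _ "int n"])
  moreover have "c / q ^ Suc n \<in> qorbit c q" for n
    unfolding qorbit_def using negative_power[of n, symmetric] by blast
  ultimately show ?thesis
    unfolding qorbit_def by blast
qed

lemma ind_qorbit:
  fixes q c :: complex
  assumes "norm q > 1" "c \<noteq> 0"
  shows "ind (qorbit c q) x =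
    (if x \<in> range (\<lambda>n. c * q ^ n) then 1 else 0) + (if x \<in> range (\<lambda>n. c / q ^ Suc n) then 1 else 0)"
proof -
  have "q \<noteq> 0"
    using assms(1) by auto
  have "c * q ^ m \<noteq> c / q ^ Suc n" for m n
  proof
    assume "c * q ^ m = c / q ^ Suc n"
    then have "q ^ (m + Suc n) = q ^ 0"
      using assms(2) \<open>q \<noteq> 0\<close> by (auto simp: power_add field_simps)
    then have "m + Suc n = 0"
      by (rule injD[OF inj_power[OF assms(1)]])
    then show False
      by simp
  qed
  then have "range (\<lambda>n. c * q ^ n) \<inter> range (\<lambda>n. c / q ^ Suc n) = {}"
    by blast
  then show ?thesis
    unfolding ind_def qorbit_eq_Un[OF \<open>q \<noteq> 0\<close>] by (auto simp del: power_Suc)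
qed

lemma qorbit_pos_iff: "q \<noteq> 0 \<Longrightarrow> x \<in> qorbit_pos a q \<longleftrightarrow> a \<in> range (\<lambda>n. x / q ^ Suc n)"
  unfolding qorbit_pos_def
  by (auto simp: field_simps simp del: power_Suc intro: exI[of _ "Suc _"] elim!: Suc_le_D[THEN exE])

lemma qorbit_nonpos_iff: "q \<noteq> 0 \<Longrightarrow> x \<in> qorbit_nonpos a q \<longleftrightarrow> a \<in> range (\<lambda>n. x * q ^ n)"
  unfolding qorbit_nonpos_def by (auto simp: power_int_minus field_simps)

section \<open>Theta functions\<close>

lemma qprod_factor_linear: "norm q > 1 \<Longrightarrow> qprod_factor q (\<lambda>u. 1 - c * u)"
  by unfold_locales (auto intro!: analytic_intros analytic_on_imp_meromorphic_on)

lemma zorder_qprod_linear: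
  assumes "norm q > 1"
  shows "zorder (qprod q (\<lambda>u. 1 - c * u)) z = (if c * z \<in> range (\<lambda>n. q ^ Suc n) then 1 else 0)"
proof -
  interpret qprod_factor q "\<lambda>u. 1 - c * u"
    by (rule qprod_factor_linear[OF assms])
  have zeros: "{n. zorder (\<lambda>u. 1 - c * u) (z / q ^ Suc n) \<noteq> 0} = {n. q ^ Suc n = c * z}"
    unfolding zorder_linear_factor using q_nonzero by (auto simp: field_simps)
  have "zorder (qprod q (\<lambda>u. 1 - c * u)) z = (\<Sum>n | q ^ Suc n = c * z. 1)"
    unfolding zorder_qprod zeros unfolding zorder_linear_factor
    by (rule sum.cong) (use q_nonzero in \<open>auto simp: field_simps\<close>)
  also have "\<dots> = int (card {n. q ^ Suc n = c * z})"
    by (simp only: sum_constant mult.right_neutral)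
  also have "\<dots> = (if c * z \<in> range (\<lambda>n. q ^ Suc n) then 1 else 0)"
  proof -
    have "inj ((\<lambda>n. q ^ n) \<circ> Suc)"
      by (intro inj_compose inj_power[OF assms] inj_Suc)
    then show ?thesis
      unfolding comp_def by (subst card_preimage_inj) auto
  qed
  finally show ?thesis .
qed

definition theta :: "complex \<Rightarrow> complex \<Rightarrow> complex \<Rightarrow> complex" where
  "theta q c x = qprod q (\<lambda>u. 1 - u / c) (q * x) * qprod q (\<lambda>u. 1 - c * u) (1 / x)"

context
  fixes q c :: complex
  assumes norm_q: "norm q > 1" and c_nonzero: "c \<noteq> 0"
begin

interpretation P: qprod_factor q "\<lambda>u. 1 - u / c"
  by unfold_locales
     (use norm_q c_nonzero in \<open>auto intro!: analytic_intros analytic_on_imp_meromorphic_on\<close>)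

interpretation Q: qprod_factor q "\<lambda>u. 1 - c * u"
  by (rule qprod_factor_linear[OF norm_q])

lemma theta_functional_eq:
  assumes "x \<noteq> 0"
  shows "theta q c (q * x) = - (q / c) * x * theta q c x"
proof -
  define A where "A = qprod q (\<lambda>u. 1 - u / c) (q * x)"
  define B where "B = qprod q (\<lambda>u. 1 - c * u) (1 / (q * x))"
  have "theta q c (q * x) = (1 - q * x / c) * A * B"
    unfolding theta_def A_def B_def by (simp add: P.qprod_functional_eq)
  also have "1 - q * x / c = - (q / c) * x * (1 - c / (q * x))"
    using assms c_nonzero P.q_nonzero by (simp add: field_simps)
  also have "theta q c x = A * ((1 - c / (q * x)) * B)"
    using Q.qprod_functional_eq[of "1 / (q * x)"] P.q_nonzero
    unfolding theta_def A_def B_def by simp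
  ultimately show ?thesis
    by (simp only: mult_ac)
qed

lemma theta_factors_nonzero_meromorphic:
  "nonzero_meromorphic_on (\<lambda>x. qprod q (\<lambda>u. 1 - u / c) (q * x)) (- {0})"
  "nonzero_meromorphic_on (\<lambda>x. qprod q (\<lambda>u. 1 - c * u) (1 / x)) (- {0})"
  using nonzero_meromorphic_on_compose_scale[OF P.qprod_meromorphic P.qprod_analytic_0, of q]
    nonzero_meromorphic_on_compose_divide[OF Q.qprod_meromorphic Q.qprod_analytic_0, of 1]
  by (auto intro: nonzero_meromorphic_on_subset)

lemma nonzero_meromorphic_on_theta: "nonzero_meromorphic_on (theta q c) (- {0})"
  unfolding theta_def[abs_def]
  by (rule nonzero_meromorphic_on_mult[OF theta_factors_nonzero_meromorphic])

lemma zorder_theta: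
  assumes "x \<noteq> 0"
  shows "zorder (theta q c) x = ind (qorbit c q) x"
proof -
  have linear: "(\<lambda>u. 1 - u / c) = (\<lambda>u. 1 - inverse c * u)"
    by (simp add: divide_inverse_commute)
  have "zorder (theta q c) x =
      zorder (\<lambda>x. qprod q (\<lambda>u. 1 - u / c) (q * x)) x + zorder (\<lambda>x. qprod q (\<lambda>u. 1 - c * u) (1 / x)) x"
    unfolding theta_def[abs_def] using assms
    by (intro zorder_nonzero_meromorphic_mult[OF theta_factors_nonzero_meromorphic]) simp
  also have "\<dots> = zorder (qprod q (\<lambda>u. 1 - u / c)) (q * x) +
      zorder (qprod q (\<lambda>u. 1 - c * u)) (1 / x)"
    using P.qprod_meromorphic Q.qprod_meromorphic P.q_nonzero assms
    by (simp add: zorder_scale zorder_compose_divide meromorphic_on_subset)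
  also have "\<dots> = (if inverse c * (q * x) \<in> range (\<lambda>n. q ^ Suc n) then 1 else 0) +
      (if c * (1 / x) \<in> range (\<lambda>n. q ^ Suc n) then 1 else 0)"
    by (simp only: linear zorder_qprod_linear[OF norm_q])
  also have "\<dots> = ind (qorbit c q) x"
  proof -
    have "inverse c * (q * x) = q ^ Suc n \<longleftrightarrow> x = c * q ^ n" for n
      using c_nonzero P.q_nonzero by (auto simp: field_simps)
    moreover have "c * (1 / x) = q ^ Suc n \<longleftrightarrow> x = c / q ^ Suc n" for n
      using c_nonzero P.q_nonzero assms by (auto simp: field_simps)
    ultimately show ?thesis
      unfolding ind_qorbit[OF norm_q c_nonzero] by (simp only: image_iff)
  qed
  finally show ?thesis .
qed

end

section \<open>Solutions of the q-difference equation\<close>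

definition qsol_ident :: "complex \<Rightarrow> complex \<Rightarrow> complex" where
  "qsol_ident q x = theta q 1 x ^ 2 / (x * theta q (-1) x)"

definition qsol_const :: "complex \<Rightarrow> complex \<Rightarrow> complex \<Rightarrow> complex" where
  "qsol_const q \<alpha> x = theta q 1 x / theta q \<alpha> x"

definition qsol ::
  "complex \<Rightarrow> complex \<Rightarrow> int \<Rightarrow> (complex \<Rightarrow> complex) \<Rightarrow> (complex \<Rightarrow> complex) \<Rightarrow> complex \<Rightarrow> complex"
  where "qsol q \<alpha> v m0 minf x =
    qsol_ident q x powi v * qsol_const q \<alpha> x * qprod q m0 x / qprod q minf (q / x)"

context
  fixes q :: complex
  assumes norm_q: "norm q > 1"
begin

lemma qsol_ident_functional_eq:
  assumes "x \<noteq> 0"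
  shows "qsol_ident q (q * x) = x * qsol_ident q x"
proof -
  have "theta q 1 (q * x) = - q * x * theta q 1 x"
    using theta_functional_eq[OF norm_q _ assms, of 1] by simp
  moreover have "theta q (-1) (q * x) = q * x * theta q (-1) x"
    using theta_functional_eq[OF norm_q _ assms, of "-1"] by simp
  moreover have "q \<noteq> 0"
    using norm_q by auto
  ultimately show ?thesis
    unfolding qsol_ident_def using assms
    by (cases "theta q (-1) x = 0") (simp_all add: field_simps power2_eq_square)
qed

lemma qsol_const_functional_eq:
  assumes "x \<noteq> 0" "\<alpha> \<noteq> 0"
  shows "qsol_const q \<alpha> (q * x) = \<alpha> * qsol_const q \<alpha> x"
proof -
  have "q \<noteq> 0"
    using norm_q by auto
  then show ?thesis
    unfolding qsol_const_def theta_functional_eq[OF norm_q one_neq_zero assms(1)]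
      theta_functional_eq[OF norm_q assms(2,1)]
    using assms by (cases "theta q \<alpha> x = 0") (simp_all add: field_simps)
qed

lemma nonzero_meromorphic_on_qsol_ident: "nonzero_meromorphic_on (qsol_ident q) (- {0})"
  unfolding qsol_ident_def[abs_def]
  by (intro nonzero_meromorphic_on_divide nonzero_meromorphic_on_power nonzero_meromorphic_on_mult
      nonzero_meromorphic_on_ident nonzero_meromorphic_on_theta[OF norm_q]) simp_all

lemma nonzero_meromorphic_on_qsol_const:
  "\<alpha> \<noteq> 0 \<Longrightarrow> nonzero_meromorphic_on (qsol_const q \<alpha>) (- {0})"
  unfolding qsol_const_def[abs_def]
  by (intro nonzero_meromorphic_on_divide nonzero_meromorphic_on_theta[OF norm_q]) simp_all

lemma zorder_qsol_ident:
  assumes "x \<noteq> 0"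
  shows "zorder (qsol_ident q) x = 2 * ind (qorbit 1 q) x - ind (qorbit (-1) q) x"
proof -
  note theta = nonzero_meromorphic_on_theta[OF norm_q]
  have "zorder (qsol_ident q) x =
      zorder (\<lambda>x. theta q 1 x ^ 2) x - zorder (\<lambda>x. x * theta q (-1) x) x"
    unfolding qsol_ident_def[abs_def] using assms
    by (intro zorder_nonzero_meromorphic_divide[where A = "- {0}"] nonzero_meromorphic_on_power
        nonzero_meromorphic_on_mult nonzero_meromorphic_on_ident theta) auto
  also have "\<dots> = 2 * zorder (theta q 1) x - (zorder (\<lambda>x. x) x + zorder (theta q (-1)) x)"
    using zorder_nonzero_meromorphic_power[OF theta, of 1 x 2]
      zorder_nonzero_meromorphic_mult[OF nonzero_meromorphic_on_ident theta, of "-1" x] assms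
    by simp
  also have "zorder (\<lambda>x. x) x = 0"
    using assms by (intro zorder_eq_0I) auto
  finally show ?thesis
    using assms by (simp add: zorder_theta[OF norm_q])
qed

lemma zorder_qsol_const:
  assumes "x \<noteq> 0" "\<alpha> \<noteq> 0"
  shows "zorder (qsol_const q \<alpha>) x = ind (qorbit 1 q) x - ind (qorbit \<alpha> q) x"
  unfolding qsol_const_def[abs_def]
  using zorder_nonzero_meromorphic_divide[OF nonzero_meromorphic_on_theta[OF norm_q]
      nonzero_meromorphic_on_theta[OF norm_q], of 1 \<alpha> x] assms
  by (simp add: zorder_theta[OF norm_q])

end

context
  fixes q \<alpha> :: complex and v :: int and m0 minf :: "complex \<Rightarrow> complex"
  assumes norm_q: "norm q > 1" and \<alpha>_nonzero: "\<alpha> \<noteq> 0"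
    and m0: "qprod_factor q m0" and minf: "qprod_factor q minf"
begin

interpretation M0: qprod_factor q m0
  by (rule m0)

interpretation Minf: qprod_factor q minf
  by (rule minf)

lemma qsol_functional_eq:
  assumes "x \<noteq> 0" "qprod q minf (q / x) \<noteq> 0"
  shows "qsol q \<alpha> v m0 minf (q * x) = \<alpha> * x powi v * m0 x * minf (1 / x) * qsol q \<alpha> v m0 minf x"
proof -
  have W: "qprod q minf (q / x) = minf (1 / x) * qprod q minf (q / (q * x))"
    by (rule Minf.qprod_reflected_recursion)
  with assms(2) have "minf (1 / x) \<noteq> 0" "qprod q minf (q / (q * x)) \<noteq> 0"
    by auto
  then show ?thesis
    unfolding qsol_def qsol_ident_functional_eq[OF norm_q assms(1)]
      qsol_const_functional_eq[OF norm_q assms(1) \<alpha>_nonzero] M0.qprod_functional_eq W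
      power_int_mult_distrib
    by (simp add: field_simps)
qed

lemma qsol_functional_eq_cosparse:
  assumes "\<forall>\<^sub>\<approx>x\<in>- {0}. m x = \<alpha> * x powi v * m0 x * minf (1 / x)"
  shows "\<forall>\<^sub>\<approx>x\<in>- {0}. qsol q \<alpha> v m0 minf (q * x) = m x * qsol q \<alpha> v m0 minf x"
proof -
  have "\<forall>\<^sub>\<approx>x\<in>- {0}. x \<in> - {0 :: complex}"
    by (rule eventually_in_cosparse) auto
  moreover have "\<forall>\<^sub>\<approx>x\<in>- {0}. qprod q minf (q / x) \<noteq> 0"
    using Minf.nonzero_meromorphic_on_qprod_reflected by (simp add: nonzero_meromorphic_on_def)
  ultimately show ?thesis
    using assms by eventually_elim (simp add: qsol_functional_eq)
qed

lemma nonzero_meromorphic_on_qsol: "nonzero_meromorphic_on (qsol q \<alpha> v m0 minf) (- {0})"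
  unfolding qsol_def[abs_def]
  by (intro nonzero_meromorphic_on_divide nonzero_meromorphic_on_mult nonzero_meromorphic_on_power_int
      nonzero_meromorphic_on_qsol_ident[OF norm_q] nonzero_meromorphic_on_qsol_const[OF norm_q \<alpha>_nonzero]
      nonzero_meromorphic_on_subset[OF M0.nonzero_meromorphic_on_qprod]
      Minf.nonzero_meromorphic_on_qprod_reflected) simp

lemma zorder_qsol:
  assumes "x \<noteq> 0"
  shows "zorder (qsol q \<alpha> v m0 minf) x =
      v * (2 * ind (qorbit 1 q) x - ind (qorbit (-1) q) x) + (ind (qorbit 1 q) x - ind (qorbit \<alpha> q) x)
    + (\<Sum>n | zorder m0 (x / q ^ Suc n) \<noteq> 0. zorder m0 (x / q ^ Suc n))
    - (\<Sum>n | zorder (\<lambda>w. minf (1 / w)) (x * q ^ n) \<noteq> 0. zorder (\<lambda>w. minf (1 / w)) (x * q ^ n))"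
proof -
  have x: "x \<in> - {0}"
    using assms by simp
  note I = nonzero_meromorphic_on_power_int[OF nonzero_meromorphic_on_qsol_ident[OF norm_q], of v]
  note C = nonzero_meromorphic_on_qsol_const[OF norm_q \<alpha>_nonzero]
  note P = nonzero_meromorphic_on_subset[OF M0.nonzero_meromorphic_on_qprod, of "- {0}", simplified]
  note W = Minf.nonzero_meromorphic_on_qprod_reflected
  have "zorder (qsol q \<alpha> v m0 minf) x =
      zorder (\<lambda>x. qsol_ident q x powi v) x + zorder (qsol_const q \<alpha>) x + zorder (qprod q m0) x
      - zorder (\<lambda>x. qprod q minf (q / x)) x"
    unfolding qsol_def[abs_def]
    using zorder_nonzero_meromorphic_divide[OF nonzero_meromorphic_on_mult[OF
          nonzero_meromorphic_on_mult[OF I C] P] W x]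
      zorder_nonzero_meromorphic_mult[OF nonzero_meromorphic_on_mult[OF I C] P x]
      zorder_nonzero_meromorphic_mult[OF I C x]
    by simp
  then show ?thesis
    using zorder_nonzero_meromorphic_power_int[OF nonzero_meromorphic_on_qsol_ident[OF norm_q] x]
    by (simp add: zorder_qsol_ident[OF norm_q assms] zorder_qsol_const[OF norm_q assms \<alpha>_nonzero]
        M0.zorder_qprod Minf.zorder_qprod_reflected[OF assms])
qed

end

section \<open>The prescribed divisor\<close>

text \<open>For \<open>\<alpha> = 1\<close> the last summand vanishes, so one formula covers all four cases.\<close>

lemma special_order_eq:
  "special_order q \<alpha> v x =
    v * (2 * ind (qorbit 1 q) x - ind (qorbit (-1) q) x) + (ind (qorbit 1 q) x - ind (qorbit \<alpha> q) x)"
  unfolding special_order_def by (simp add: algebra_simps)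

lemma sum_multiplicities_on_range:
  fixes h :: "nat \<Rightarrow> complex" and f mu :: "complex \<Rightarrow> int"
  assumes inj: "inj h" and fin: "finite {n. f (h n) \<noteq> 0}"
    and Zs: "\<And>a. a \<in> range h \<Longrightarrow> f a > 0 \<longleftrightarrow> a \<in> Zs"
    and Ps: "\<And>a. a \<in> range h \<Longrightarrow> f a < 0 \<longleftrightarrow> a \<in> Ps"
    and mu: "\<And>a. a \<in> Zs \<union> Ps \<Longrightarrow> mu a = \<bar>f a\<bar>"
  shows "(\<Sum>a\<in>{a \<in> Zs. a \<in> range h}. mu a) - (\<Sum>a\<in>{a \<in> Ps. a \<in> range h}. mu a) =
    (\<Sum>n | f (h n) \<noteq> 0. f (h n))"
proof -
  have reindex: "(\<Sum>a\<in>h ` S. mu a) = (\<Sum>n\<in>S. mu (h n))" for S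
    by (simp add: sum.reindex inj_on_subset[OF inj])
  have Zs_range: "{a \<in> Zs. a \<in> range h} = h ` {n. f (h n) > 0}"
    using Zs by auto
  have pos: "(\<Sum>a\<in>{a \<in> Zs. a \<in> range h}. mu a) = (\<Sum>n | f (h n) > 0. f (h n))"
    unfolding Zs_range reindex using Zs[OF rangeI] mu[of "h _"] by (intro sum.cong) force+
  have Ps_range: "{a \<in> Ps. a \<in> range h} = h ` {n. f (h n) < 0}"
    using Ps by auto
  have neg: "(\<Sum>a\<in>{a \<in> Ps. a \<in> range h}. mu a) = - (\<Sum>n | f (h n) < 0. f (h n))"
    unfolding Ps_range reindex sum_negf[symmetric] using Ps[OF rangeI] mu[of "h _"]
    by (intro sum.cong) force+
  have "{n. f (h n) \<noteq> 0} = {n. f (h n) > 0} \<union> {n. f (h n) < 0}"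
    by auto
  then have "(\<Sum>n | f (h n) \<noteq> 0. f (h n)) = (\<Sum>n | f (h n) > 0. f (h n)) + (\<Sum>n | f (h n) < 0. f (h n))"
    using fin by (auto intro: sum.union_disjoint)
  with pos neg show ?thesis
    by simp
qed

lemma sum_mult_eq_sum_zorder:
  fixes h :: "nat \<Rightarrow> complex" and f m :: "complex \<Rightarrow> complex"
  assumes inj: "inj h" and fin: "finite {n. zorder f (h n) \<noteq> 0}"
    and "0 \<notin> range h" "0 \<notin> Zs \<union> Ps"
    and divisor: "\<forall>z. z \<noteq> 0 \<longrightarrow>
        (zorder f z > 0 \<longleftrightarrow> z \<in> Zs) \<and> (zorder f z < 0 \<longleftrightarrow> z \<in> Ps) \<and>
        (z \<in> Zs \<union> Ps \<longrightarrow> zorder f z = zorder m z)"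
  shows "(\<Sum>a\<in>{a \<in> Zs. a \<in> range h}. mult m a) - (\<Sum>a\<in>{a \<in> Ps. a \<in> range h}. mult m a) =
    (\<Sum>n | zorder f (h n) \<noteq> 0. zorder f (h n))"
proof (rule sum_multiplicities_on_range[OF inj fin])
  show "zorder f a > 0 \<longleftrightarrow> a \<in> Zs" "zorder f a < 0 \<longleftrightarrow> a \<in> Ps" if "a \<in> range h" for a
  proof -
    have "a \<noteq> 0"
      using that \<open>0 \<notin> range h\<close> by auto
    then show "zorder f a > 0 \<longleftrightarrow> a \<in> Zs" "zorder f a < 0 \<longleftrightarrow> a \<in> Ps"
      using divisor[rule_format, of a] by simp_all
  qed
  show "mult m a = \<bar>zorder f a\<bar>" if "a \<in> Zs \<union> Ps" for a
  proof -
    have "a \<noteq> 0"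
      using that \<open>0 \<notin> Zs \<union> Ps\<close> by auto
    then show ?thesis
      using divisor[rule_format, of a] that by (auto simp: mult_def)
  qed
qed

lemma generic_order_eq:
  fixes q x :: complex and f g :: "complex \<Rightarrow> complex"
  assumes norm_q: "norm q > 1" and x: "x \<noteq> 0"
    and f_divisor: "\<forall>z. z \<noteq> 0 \<longrightarrow>
        (zorder f z > 0 \<longleftrightarrow> z \<in> Z_gt m \<rho>) \<and>
        (zorder f z < 0 \<longleftrightarrow> z \<in> P_gt m \<rho>') \<and>
        (z \<in> Z_gt m \<rho> \<union> P_gt m \<rho>' \<longrightarrow> zorder f z = zorder m z)"
    and g_divisor: "\<forall>z. z \<noteq> 0 \<longrightarrow>
        (zorder g z > 0 \<longleftrightarrow> z \<in> Z_le m \<rho>) \<and>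
        (zorder g z < 0 \<longleftrightarrow> z \<in> P_le m \<rho>') \<and>
        (z \<in> Z_le m \<rho> \<union> P_le m \<rho>' \<longrightarrow> zorder g z = zorder m z)"
    and f_finite: "finite {n. zorder f (x / q ^ Suc n) \<noteq> 0}"
    and g_finite: "finite {n. zorder g (x * q ^ n) \<noteq> 0}"
  shows "generic_order m q \<rho> \<rho>' x =
    (\<Sum>n | zorder f (x / q ^ Suc n) \<noteq> 0. zorder f (x / q ^ Suc n)) -
    (\<Sum>n | zorder g (x * q ^ n) \<noteq> 0. zorder g (x * q ^ n))"
proof -
  have q: "q \<noteq> 0"
    using norm_q by auto
  have not_0: "0 \<notin> Z_gt m \<rho> \<union> P_gt m \<rho>'" "0 \<notin> Z_le m \<rho> \<union> P_le m \<rho>'"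
    by (simp_all add: Z_gt_def P_gt_def Z_le_def P_le_def zeros_star_def poles_star_def)
  have "inj ((\<lambda>n. x / q ^ n) \<circ> Suc)"
    using inj_power[OF norm_q] x q by (intro inj_compose inj_Suc) (auto simp: inj_def)
  then have f_sum: "(\<Sum>a\<in>{a \<in> Z_gt m \<rho>. x \<in> qorbit_pos a q}. mult m a) -
      (\<Sum>a\<in>{a \<in> P_gt m \<rho>'. x \<in> qorbit_pos a q}. mult m a) =
      (\<Sum>n | zorder f (x / q ^ Suc n) \<noteq> 0. zorder f (x / q ^ Suc n))"
    unfolding qorbit_pos_iff[OF q] comp_def
    by (rule sum_mult_eq_sum_zorder[OF _ f_finite _ not_0(1) f_divisor]) (use x q in auto)
  have "inj (\<lambda>n. x * q ^ n)"
    using inj_power[OF norm_q] x by (auto simp: inj_def)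
  then have g_sum: "(\<Sum>a\<in>{a \<in> Z_le m \<rho>. x \<in> qorbit_nonpos a q}. mult m a) -
      (\<Sum>a\<in>{a \<in> P_le m \<rho>'. x \<in> qorbit_nonpos a q}. mult m a) =
      (\<Sum>n | zorder g (x * q ^ n) \<noteq> 0. zorder g (x * q ^ n))"
    unfolding qorbit_nonpos_iff[OF q]
    by (rule sum_mult_eq_sum_zorder[OF _ g_finite _ not_0(2) g_divisor]) (use x q in auto)
  from f_sum g_sum show ?thesis
    unfolding generic_order_def by linarith
qed

theorem corollary2p11:
  fixes q \<alpha> :: complex and \<rho> \<rho>' :: real and v :: int
    and m m0 minf :: "complex \<Rightarrow> complex"
  assumes hq: "norm q > 1"
    and hrho: "\<rho> > 0" and hrho': "\<rho>' > 0"
    and hm: "m meromorphic_on (- {0})"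
    and hm_nz: "\<not> (\<forall>\<^sub>\<approx>x\<in>- {0}. m x = 0)"
    and halpha: "\<alpha> \<noteq> 0"
    and hm0: "m0 meromorphic_on UNIV" and hm0_0: "m0 analytic_on {0}" and hm0_1: "m0 0 = 1"
    and hminf: "minf meromorphic_on UNIV" and hminf_0: "minf analytic_on {0}"
    and hminf_1: "minf 0 = 1"
    and hfact: "\<forall>\<^sub>\<approx>x\<in>- {0}. m x = \<alpha> * x powi v * m0 x * minf (1 / x)"
    and hm0_div: "\<forall>z. z \<noteq> 0 \<longrightarrow>
        (zorder m0 z > 0 \<longleftrightarrow> z \<in> Z_gt m \<rho>) \<and>
        (zorder m0 z < 0 \<longleftrightarrow> z \<in> P_gt m \<rho>') \<and>
        (z \<in> Z_gt m \<rho> \<union> P_gt m \<rho>' \<longrightarrow> zorder m0 z = zorder m z)"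
    and hminf_div: "\<forall>z. z \<noteq> 0 \<longrightarrow>
        (zorder (\<lambda>x. minf (1 / x)) z > 0 \<longleftrightarrow> z \<in> Z_le m \<rho>) \<and>
        (zorder (\<lambda>x. minf (1 / x)) z < 0 \<longleftrightarrow> z \<in> P_le m \<rho>') \<and>
        (z \<in> Z_le m \<rho> \<union> P_le m \<rho>' \<longrightarrow> zorder (\<lambda>x. minf (1 / x)) z = zorder m z)"
  shows "\<exists>y. y meromorphic_on (- {0})
           \<and> \<not> (\<forall>\<^sub>\<approx>x\<in>- {0}. y x = 0)
           \<and> (\<forall>\<^sub>\<approx>x\<in>- {0}. y (q * x) = m x * y x)
           \<and> (\<forall>x. x \<noteq> 0 \<longrightarrow>
                zorder y x = special_order q \<alpha> v x + generic_order m q \<rho> \<rho>' x)"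
proof -
  have m0: "qprod_factor q m0" and minf: "qprod_factor q minf"
    by unfold_locales (use hq hm0 hm0_0 hm0_1 hminf hminf_0 hminf_1 in auto)
  define y where "y = qsol q \<alpha> v m0 minf"
  have y: "nonzero_meromorphic_on y (- {0})"
    unfolding y_def by (rule nonzero_meromorphic_on_qsol[OF hq halpha m0 minf])
  have "zorder y x = special_order q \<alpha> v x + generic_order m q \<rho> \<rho>' x" if "x \<noteq> 0" for x
    using zorder_qsol[OF hq halpha m0 minf that] special_order_eq[of q \<alpha> v x]
      generic_order_eq[OF hq that hm0_div hminf_div qprod_factor.finite_zorder_factors[OF m0]
        qprod_factor.finite_zorder_reflected_factors[OF minf that]]
    by (simp add: y_def)
  moreover have "\<forall>\<^sub>\<approx>x\<in>- {0}. y (q * x) = m x * y x"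
    unfolding y_def by (rule qsol_functional_eq_cosparse[OF hq halpha m0 minf hfact])
  ultimately show ?thesis
    using y nonzero_meromorphic_on_not_eventually_zero[OF y]
    by (intro exI[of _ y]) (auto simp: nonzero_meromorphic_on_def)
qed

end
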